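(* Let $1\le m\le n$, $\boldsymbol{\theta}^*\in\mathbb{R}^{m+n-1}$ and $X\sim\mathbb{P}_{\boldsymbol{\theta}^*}$. Let $V$ be the Fisher information matrix and $S$ the matrix defined below, both evaluated at $\boldsymbol{\theta}^*$, let $R=V^{-1}-S$ and $U=\mathrm{Cov}[R\{\mathbf{g}-\mathbb{E}\mathbf{g}\}]$. Then \[ \|U\|\le\|V^{-1}-S\|+\frac{3(1+e^{2\|\boldsymbol{\theta}^*\|_\infty})^4}{4mn\,e^{4\|\boldsymbol{\theta}^*\|_\infty}}, \] where $\|A\|:=\max_{i,j}|a_{i,j}|$.
   Context: Affiliation network model: $X=(x_{i,j})$ is an $m\times n$ $\{0,1\}$-matrix; parameters $\alpha_1,\dots,\alpha_m,\beta_1,\dots,\beta_n$ with $\beta_n=0$, $\boldsymbol{\theta}=(\alpha_1,\dots,\alpha_m,\beta_1,\dots,\beta_{n-1})^\top$; under $\mathbb{P}_{\boldsymbol{\theta}}$ the $x_{i,j}$ are independent Bernoulli with success probability $e^{\alpha_i+\beta_j}/(1+e^{\alpha_i+\beta_j})$. $d_i=\sum_j x_{i,j}$, $b_j=\sum_i x_{i,j}$, $\mathbf{g}=(d_1,\dots,d_m,b_1,\dots,b_{n-1})^\top$. Write $u_{i,j}=e^{\alpha_i+\beta_j}/(1+e^{\alpha_i+\beta_j})^2$. The Fisher information $V=(v_{k,l})$ is the $(m+n-1)\times(m+n-1)$ symmetric matrix with $v_{i,i}=\sum_{j=1}^n u_{i,j}$ ($i\le m$), $v_{m+j,m+j}=\sum_{i=1}^m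 u_{i,j}$ ($j\le n-1$), $v_{i,m+j}=v_{m+j,i}=u_{i,j}$ ($i\le m$, $j\le n-1$), and all other entries zero; also set $v_{m+n,m+n}=\sum_{i=1}^m u_{i,n}$. $S=(s_{k,l})$: $s_{k,l}=\frac{\delta_{k,l}}{v_{k,k}}+\frac{1}{v_{m+n,m+n}}$ if $k,l\in\{1,\dots,m\}$ or $k,l\in\{m+1,\dots,m+n-1\}$, and $s_{k,l}=-\frac{1}{v_{m+n,m+n}}$ otherwise. *)

theory Defs
  imports Complex_Main
begin

text \<open>Indices are 0-based: rows i < m, columns j < n.
  The parameter vector theta has length m+n-1: alpha_i = theta i (i < m),
  beta_j = theta (m+j) (j < n-1), and beta_(n-1) = 0.
  Matrices of size N are functions nat => nat => real, only entries i,j < N matter.\<close>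

definition alpha :: "(nat \<Rightarrow> real) \<Rightarrow> nat \<Rightarrow> real" where
  "alpha theta i = theta i"

definition beta :: "nat \<Rightarrow> nat \<Rightarrow> (nat \<Rightarrow> real) \<Rightarrow> nat \<Rightarrow> real" where
  "beta m n theta j = (if j < n - 1 then theta (m + j) else 0)"

definition pij :: "nat \<Rightarrow> nat \<Rightarrow> (nat \<Rightarrow> real) \<Rightarrow> nat \<Rightarrow> nat \<Rightarrow> real" where
  "pij m n theta i j = exp (alpha theta i + beta m n theta j) / (1 + exp (alpha theta i + beta m n theta j))"

definition uij :: "nat \<Rightarrow> nat \<Rightarrow> (nat \<Rightarrow> real) \<Rightarrow> nat \<Rightarrow> nat \<Rightarrow> real" where
  "uij m n theta i j = exp (alpha theta i + beta m n theta j) / (1 + exp (alpha theta i + beta m n theta j))^2"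

definition fisherV :: "nat \<Rightarrow> nat \<Rightarrow> (nat \<Rightarrow> real) \<Rightarrow> nat \<Rightarrow> nat \<Rightarrow> real" where
  "fisherV m n theta k l =
     (if k < m \<and> l < m then (if k = l then (\<Sum>j<n. uij m n theta k j) else 0)
      else if k < m \<and> m \<le> l \<and> l < m + n - 1 then uij m n theta k (l - m)
      else if m \<le> k \<and> k < m + n - 1 \<and> l < m then uij m n theta l (k - m)
      else if m \<le> k \<and> k < m + n - 1 \<and> m \<le> l \<and> l < m + n - 1 then
        (if k = l then (\<Sum>i<m. uij m n theta i (k - m)) else 0)
      else 0)"

text \<open>v_{m+n,m+n} = sum_i u_{i,n}  (0-based column n-1).\<close>
definition vlast :: "nat \<Rightarrow> nat \<Rightarrow> (nat \<Rightarrow> real) \<Rightarrow> real" where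
  "vlast m n theta = (\<Sum>i<m. uij m n theta i (n - 1))"

definition approxS :: "nat \<Rightarrow> nat \<Rightarrow> (nat \<Rightarrow> real) \<Rightarrow> nat \<Rightarrow> nat \<Rightarrow> real" where
  "approxS m n theta k l =
     (if k < m + n - 1 \<and> l < m + n - 1 then
        (if (k < m \<and> l < m) \<or> (m \<le> k \<and> m \<le> l)
         then (if k = l then 1 / fisherV m n theta k k else 0) + 1 / vlast m n theta
         else - 1 / vlast m n theta)
      else 0)"

definition mat_inv :: "nat \<Rightarrow> (nat \<Rightarrow> nat \<Rightarrow> real) \<Rightarrow> nat \<Rightarrow> nat \<Rightarrow> real" where
  "mat_inv N A = (THE W. (\<forall>i<N. \<forall>j<N. (\<Sum>k<N. A i k * W k j) = (if i = j then 1 else 0)) \<and>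
                        (\<forall>i<N. \<forall>j<N. (\<Sum>k<N. W i k * A k j) = (if i = j then 1 else 0)) \<and>
                        (\<forall>i j. \<not> (i < N \<and> j < N) \<longrightarrow> W i j = 0))"

definition max_norm :: "nat \<Rightarrow> (nat \<Rightarrow> nat \<Rightarrow> real) \<Rightarrow> real" where
  "max_norm N A = Max {\<bar>A i j\<bar> | i j. i < N \<and> j < N}"

definition sup_norm :: "nat \<Rightarrow> (nat \<Rightarrow> real) \<Rightarrow> real" where
  "sup_norm N x = Max {\<bar>x i\<bar> | i. i < N}"

definition adj_space :: "nat \<Rightarrow> nat \<Rightarrow> (nat \<Rightarrow> nat \<Rightarrow> bool) set" where
  "adj_space m n = {X. \<forall>i j. \<not> (i < m \<and> j < n) \<longrightarrow> \<not> X i j}"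

definition prob_X :: "nat \<Rightarrow> nat \<Rightarrow> (nat \<Rightarrow> real) \<Rightarrow> (nat \<Rightarrow> nat \<Rightarrow> bool) \<Rightarrow> real" where
  "prob_X m n theta X = (\<Prod>i<m. \<Prod>j<n. if X i j then pij m n theta i j else 1 - pij m n theta i j)"

definition expect :: "nat \<Rightarrow> nat \<Rightarrow> (nat \<Rightarrow> real) \<Rightarrow> ((nat \<Rightarrow> nat \<Rightarrow> bool) \<Rightarrow> real) \<Rightarrow> real" where
  "expect m n theta f = (\<Sum>X\<in>adj_space m n. prob_X m n theta X * f X)"

definition degvec :: "nat \<Rightarrow> nat \<Rightarrow> (nat \<Rightarrow> nat \<Rightarrow> bool) \<Rightarrow> nat \<Rightarrow> real" where
  "degvec m n X k =
     (if k < m then (\<Sum>j<n. if X k j then 1 else 0)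
      else if k < m + n - 1 then (\<Sum>i<m. if X i (k - m) then 1 else 0)
      else 0)"

definition cov_mat :: "nat \<Rightarrow> nat \<Rightarrow> (nat \<Rightarrow> real) \<Rightarrow> ((nat \<Rightarrow> nat \<Rightarrow> bool) \<Rightarrow> nat \<Rightarrow> real)
                         \<Rightarrow> nat \<Rightarrow> nat \<Rightarrow> real" where
  "cov_mat m n theta Y k l =
     expect m n theta (\<lambda>X. Y X k * Y X l) - expect m n theta (\<lambda>X. Y X k) * expect m n theta (\<lambda>X. Y X l)"

end

theory Submission
  imports Defs "HOL-Library.FuncSet" "Jordan_Normal_Form.Determinant"
begin

text \<open>The centred degree vector g - E g is a combination, with the incidence vectors of the edges as
  coefficients, of the independent centred edge indicators x_ij - p_ij, whose variances are u_ij.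
  Hence Cov[R (g - E g)] = R V R^T, and since V^-1 is a left inverse of the symmetric matrix V,
  R = V^-1 - S gives R V R^T = R^T - S + S V S^T. Computing S V S^T edge by edge shows that every
  entry of S V S^T - S is a sum of at most two terms of the form u_ij / (v_kk v_ll), each at most
  1 / (4 m n b^2), where b = e^(2 M) / (1 + e^(2 M))^2 with M = ||theta|| bounds all u_ij from below.\<close>

lemma adj_space_bij_PiE:
  "bij_betw (\<lambda>X. restrict (\<lambda>c. X (fst c) (snd c)) ({..<m}\<times>{..<n})) (adj_space m n)
     (PiE ({..<m}\<times>{..<n}) (\<lambda>_. UNIV))"
  by (rule bij_betw_byWitness[where f'="\<lambda>g i j. if (i, j) \<in> {..<m}\<times>{..<n} then g (i, j) else False"])
     (auto simp: adj_space_def fun_eq_iff PiE_def extensional_def)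

lemma expect_prod_cells:
  "expect m n th (\<lambda>X. \<Prod>c\<in>{..<m}\<times>{..<n}. Q c (X (fst c) (snd c))) =
   (\<Prod>c\<in>{..<m}\<times>{..<n}. pij m n th (fst c) (snd c) * Q c True
                        + (1 - pij m n th (fst c) (snd c)) * Q c False)"
proof -
  let ?G = "{..<m}\<times>{..<n}"
  define H where "H c b = (if b then pij m n th (fst c) (snd c) else 1 - pij m n th (fst c) (snd c)) * Q c b"
    for c b
  have "expect m n th (\<lambda>X. \<Prod>c\<in>?G. Q c (X (fst c) (snd c))) =
        (\<Sum>X\<in>adj_space m n. \<Prod>c\<in>?G. H c (restrict (\<lambda>c. X (fst c) (snd c)) ?G c))"
    unfolding expect_def prob_X_def H_def
    by (simp add: prod.distrib[symmetric] prod.cartesian_product case_prod_beta cong: prod.cong)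
  also have "\<dots> = (\<Sum>g\<in>PiE ?G (\<lambda>_. UNIV). \<Prod>c\<in>?G. H c (g c))"
    using sum.reindex_bij_betw[OF adj_space_bij_PiE, of "\<lambda>g. \<Prod>c\<in>?G. H c (g c)" m n] by simp
  also have "\<dots> = (\<Prod>c\<in>?G. \<Sum>b\<in>UNIV. H c b)"
    by (rule prod_sum_PiE[symmetric]) auto
  finally show ?thesis
    by (simp add: UNIV_bool H_def add.commute)
qed

lemma expect_sum: "expect m n th (\<lambda>X. \<Sum>s\<in>A. f s X) = (\<Sum>s\<in>A. expect m n th (f s))"
  unfolding expect_def by (simp add: sum_distrib_left sum.swap[of _ A])

lemma expect_diff: "expect m n th (\<lambda>X. f X - g X) = expect m n th f - expect m n th g"
  unfolding expect_def by (simp add: algebra_simps sum_subtractf)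

lemma expect_mult_left: "expect m n th (\<lambda>X. a * f X) = a * expect m n th f"
  unfolding expect_def sum_distrib_left by (rule sum.cong) auto

lemma expect_const: "expect m n th (\<lambda>X. a) = a"
  using expect_prod_cells[of m n th "\<lambda>c b. 1"] expect_mult_left[of m n th a "\<lambda>X. 1"] by simp

lemma expect_prod_indicators:
  assumes "C \<subseteq> {..<m}\<times>{..<n}"
  shows "expect m n th (\<lambda>X. \<Prod>c\<in>C. if X (fst c) (snd c) then 1 else 0)
           = (\<Prod>c\<in>C. pij m n th (fst c) (snd c))"
proof -
  let ?G = "{..<m}\<times>{..<n}"
  have C: "?G \<inter> C = C" using assms by blast
  have "expect m n th (\<lambda>X. \<Prod>c\<in>C. if X (fst c) (snd c) then 1 else 0) =
        expect m n th (\<lambda>X. \<Prod>c\<in>?G. if c \<in> C then (if X (fst c) (snd c) then 1 else 0) else 1)"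
    by (simp only: prod.inter_restrict[symmetric] finite_cartesian_product finite_lessThan C)
  also have "\<dots> = (\<Prod>c\<in>?G. if c \<in> C then pij m n th (fst c) (snd c) else 1)"
    using expect_prod_cells[of m n th "\<lambda>c b. if c \<in> C then (if b then 1 else 0) else 1"]
    by (simp add: if_distrib cong: if_cong)
  also have "\<dots> = (\<Prod>c\<in>C. pij m n th (fst c) (snd c))"
    by (simp only: prod.inter_restrict[symmetric] finite_cartesian_product finite_lessThan C)
  finally show ?thesis .
qed

lemma expect_indicator:
  "i < m \<Longrightarrow> j < n \<Longrightarrow> expect m n th (\<lambda>X. if X i j then 1 else 0) = pij m n th i j"
  using expect_prod_indicators[of "{(i, j)}" m n th] by simp

lemma expect_indicator_mult:
  assumes "(i, j) \<in> {..<m}\<times>{..<n}" "(i', j') \<in> {..<m}\<times>{..<n}" "(i, j) \<noteq> (i', j')"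
  shows "expect m n th (\<lambda>X. (if X i j then 1 else 0) * (if X i' j' then 1 else 0))
           = pij m n th i j * pij m n th i' j'"
  using expect_prod_indicators[of "{(i, j), (i', j')}" m n th] assms by simp

lemma pij_mult_one_minus: "pij m n th i j * (1 - pij m n th i j) = uij m n th i j"
proof -
  define e where "e = exp (alpha th i + beta m n th j)"
  have "e > 0" by (simp add: e_def)
  then show ?thesis unfolding pij_def uij_def e_def[symmetric]
    by (simp add: field_simps power2_eq_square)
qed

definition centred_edge :: "nat \<Rightarrow> nat \<Rightarrow> (nat \<Rightarrow> real) \<Rightarrow> nat \<times> nat \<Rightarrow> (nat \<Rightarrow> nat \<Rightarrow> bool) \<Rightarrow> real"
  where "centred_edge m n th c X = (if X (fst c) (snd c) then 1 else 0) - pij m n th (fst c) (snd c)"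

lemma expect_centred_edge: "c \<in> {..<m}\<times>{..<n} \<Longrightarrow> expect m n th (centred_edge m n th c) = 0"
  unfolding centred_edge_def by (cases c) (simp add: expect_diff expect_indicator expect_const)

lemma expect_centred_edge_mult:
  assumes "c \<in> {..<m}\<times>{..<n}" "c' \<in> {..<m}\<times>{..<n}"
  shows "expect m n th (\<lambda>X. centred_edge m n th c X * centred_edge m n th c' X)
           = (if c = c' then uij m n th (fst c) (snd c) else 0)"
proof -
  obtain i j i' j' where c: "c = (i, j)" "c' = (i', j')" by (cases c, cases c')
  let ?p = "pij m n th i j" and ?p' = "pij m n th i' j'"
  let ?x = "\<lambda>X. if X i j then 1 else 0 :: real" and ?x' = "\<lambda>X. if X i' j' then 1 else 0 :: real"
  have "(\<lambda>X. centred_edge m n th c X * centred_edge m n th c' X)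
          = (\<lambda>X. (?x X * ?x' X - ?p' * ?x X) - (?p * ?x' X - ?p * ?p'))"
    by (simp add: centred_edge_def c fun_eq_iff algebra_simps)
  then have eq: "expect m n th (\<lambda>X. centred_edge m n th c X * centred_edge m n th c' X)
                  = expect m n th (\<lambda>X. ?x X * ?x' X) - ?p * ?p'"
    using assms c by (simp add: expect_diff expect_mult_left expect_indicator expect_const)
  show ?thesis
  proof (cases "c = c'")
    case True
    then have "(\<lambda>X. ?x X * ?x' X) = ?x" using c by auto
    then show ?thesis
      using eq assms c True pij_mult_one_minus[of m n th i j] by (simp add: expect_indicator algebra_simps)
  qed (use eq assms c in \<open>auto simp: expect_indicator_mult\<close>)
qed

text \<open>The edge (i, j) contributes to the row degree d_i and, unless j is the last column, to the
  column degree b_j; thus g = sum_c x_c incidence c and V = sum_c u_c incidence c incidence c^T.\<close>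
definition incidence :: "nat \<Rightarrow> nat \<Rightarrow> nat \<times> nat \<Rightarrow> nat \<Rightarrow> real" where
  "incidence m n c r = (if r = fst c then 1 else 0) + (if snd c < n - 1 \<and> r = m + snd c then 1 else 0)"

lemma sum_mult_incidence:
  assumes "i < m" "j < n"
  shows "(\<Sum>r<m+n-1. x r * incidence m n (i, j) r) = x i + (if j < n - 1 then x (m + j) else 0)"
proof -
  have "(\<Sum>r<m+n-1. x r * incidence m n (i, j) r) =
        (\<Sum>r<m+n-1. (if r = i then x r else 0) + (if j < n - 1 \<and> r = m + j then x r else 0))"
    by (intro sum.cong refl) (simp add: incidence_def distrib_left)
  also have "\<dots> = (\<Sum>r<m+n-1. if r = i then x r else 0) + (\<Sum>r<m+n-1. if j < n - 1 \<and> r = m + j then x r else 0)"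
    by (rule sum.distrib)
  also have "\<dots> = x i + (if j < n - 1 then x (m + j) else 0)"
    using assms by (auto simp: sum.delta' cong: conj_cong)
  finally show ?thesis .
qed

lemma sum_cells_mult_incidence_row:
  assumes "k < m"
  shows "(\<Sum>c\<in>{..<m}\<times>{..<n}. f c * incidence m n c k) = (\<Sum>j<n. f (k, j))"
proof -
  have "(\<Sum>c\<in>{..<m}\<times>{..<n}. f c * incidence m n c k) = (\<Sum>i<m. \<Sum>j<n. if i = k then f (i, j) else 0)"
    unfolding sum.cartesian_product using assms by (intro sum.cong refl) (auto simp: incidence_def)
  also have "\<dots> = (\<Sum>i<m. if i = k then \<Sum>j<n. f (i, j) else 0)"
    by (intro sum.cong refl) auto
  finally show ?thesis using assms by (simp add: sum.delta')
qed

lemma sum_cells_mult_incidence_col: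
  assumes "m \<le> k" "k < m + n - 1"
  shows "(\<Sum>c\<in>{..<m}\<times>{..<n}. f c * incidence m n c k) = (\<Sum>i<m. f (i, k - m))"
proof -
  have "(\<Sum>c\<in>{..<m}\<times>{..<n}. f c * incidence m n c k) = (\<Sum>i<m. \<Sum>j<n. if j = k - m then f (i, j) else 0)"
    unfolding sum.cartesian_product using assms by (intro sum.cong refl) (auto simp: incidence_def)
  also have "\<dots> = (\<Sum>i<m. f (i, k - m))"
  proof -
    have "k - m < n" using assms by arith
    then show ?thesis by (simp add: sum.delta')
  qed
  finally show ?thesis .
qed

lemma degvec_incidence:
  assumes "l < m + n - 1"
  shows "degvec m n X l = (\<Sum>c\<in>{..<m}\<times>{..<n}. (if X (fst c) (snd c) then 1 else 0) * incidence m n c l)"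
  using assms by (cases "l < m") (simp_all add: degvec_def sum_cells_mult_incidence_row sum_cells_mult_incidence_col)

lemma fisherV_incidence:
  assumes "k < m + n - 1" "l < m + n - 1"
  shows "fisherV m n th k l
           = (\<Sum>c\<in>{..<m}\<times>{..<n}. uij m n th (fst c) (snd c) * incidence m n c l * incidence m n c k)"
proof (cases "k < m")
  case True
  have "(\<Sum>j<n. uij m n th k j * incidence m n (k, j) l) = fisherV m n th k l"
  proof (cases "l < m")
    case False
    then have "(\<Sum>j<n. uij m n th k j * incidence m n (k, j) l) = (\<Sum>j<n. if j = l - m then uij m n th k j else 0)"
      using True assms by (intro sum.cong refl) (auto simp: incidence_def)
    then show ?thesis using True False assms by (simp add: fisherV_def)
  qed (use True assms in \<open>auto simp: incidence_def fisherV_def sum.delta' cong: if_cong\<close>)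
  then show ?thesis using True by (subst sum_cells_mult_incidence_row) auto
next
  case False
  have "(\<Sum>i<m. uij m n th i (k - m) * incidence m n (i, k - m) l) = fisherV m n th k l"
  proof (cases "l < m")
    case True
    then have "(\<Sum>i<m. uij m n th i (k - m) * incidence m n (i, k - m) l) = (\<Sum>i<m. if i = l then uij m n th i (k - m) else 0)"
      using False assms by (intro sum.cong refl) (auto simp: incidence_def)
    then show ?thesis using True False assms by (simp add: fisherV_def)
  qed (use False assms in \<open>auto simp: incidence_def fisherV_def cong: if_cong\<close>)
  then show ?thesis using False assms by (subst sum_cells_mult_incidence_col) auto
qed

lemma mult_sum_mult_sum:
  "(u::real) * (\<Sum>r\<in>A. f r) * (\<Sum>s\<in>B. g s) = (\<Sum>r\<in>A. \<Sum>s\<in>B. u * f r * g s)"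
proof -
  have "u * (\<Sum>r\<in>A. f r) * (\<Sum>s\<in>B. g s) = u * (\<Sum>r\<in>A. \<Sum>s\<in>B. f r * g s)"
    by (simp add: sum_product mult.assoc)
  then show ?thesis by (simp add: sum_distrib_left mult.assoc)
qed

lemma fisherV_quadratic_form:
  "(\<Sum>r<m+n-1. \<Sum>s<m+n-1. A r * fisherV m n th r s * B s) =
   (\<Sum>c\<in>{..<m}\<times>{..<n}. uij m n th (fst c) (snd c)
       * (\<Sum>r<m+n-1. A r * incidence m n c r) * (\<Sum>s<m+n-1. B s * incidence m n c s))"
proof -
  let ?G = "{..<m}\<times>{..<n}" and ?u = "\<lambda>c. uij m n th (fst c) (snd c)"
  have "(\<Sum>r<m+n-1. \<Sum>s<m+n-1. A r * fisherV m n th r s * B s) =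
        (\<Sum>r<m+n-1. \<Sum>s<m+n-1. \<Sum>c\<in>?G. ?u c * (A r * incidence m n c r) * (B s * incidence m n c s))"
    by (intro sum.cong refl) (simp add: fisherV_incidence sum_distrib_left sum_distrib_right ac_simps)
  also have "\<dots> = (\<Sum>c\<in>?G. \<Sum>r<m+n-1. \<Sum>s<m+n-1. ?u c * (A r * incidence m n c r) * (B s * incidence m n c s))"
    by (simp add: sum.swap[of _ ?G])
  also have "\<dots> = (\<Sum>c\<in>?G. ?u c * (\<Sum>r<m+n-1. A r * incidence m n c r) * (\<Sum>s<m+n-1. B s * incidence m n c s))"
    by (simp only: mult_sum_mult_sum)
  finally show ?thesis .
qed

lemma fisherV_sym: "r < m+n-1 \<Longrightarrow> s < m+n-1 \<Longrightarrow> fisherV m n th r s = fisherV m n th s r"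
  by (simp add: fisherV_incidence ac_simps)

lemma degvec_minus_expect:
  assumes "l < m + n - 1"
  shows "degvec m n X l - expect m n th (\<lambda>Y. degvec m n Y l)
           = (\<Sum>c\<in>{..<m}\<times>{..<n}. incidence m n c l * centred_edge m n th c X)"
proof -
  have "expect m n th (\<lambda>Y. degvec m n Y l)
          = (\<Sum>c\<in>{..<m}\<times>{..<n}. incidence m n c l * pij m n th (fst c) (snd c))"
    using assms by (auto simp: degvec_incidence expect_sum mult.commute[of _ "incidence m n _ l"]
                               expect_mult_left expect_indicator intro: sum.cong)
  then show ?thesis
    using assms by (simp add: degvec_incidence centred_edge_def sum_subtractf[symmetric] algebra_simps)
qed

lemma expect_centred_edge_combination_mult:
  "expect m n th (\<lambda>X. (\<Sum>c\<in>{..<m}\<times>{..<n}. a c * centred_edge m n th c X)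
                     * (\<Sum>c\<in>{..<m}\<times>{..<n}. b c * centred_edge m n th c X))
     = (\<Sum>c\<in>{..<m}\<times>{..<n}. uij m n th (fst c) (snd c) * a c * b c)"
proof -
  let ?G = "{..<m}\<times>{..<n}"
  have "expect m n th (\<lambda>X. (\<Sum>c\<in>?G. a c * centred_edge m n th c X) * (\<Sum>c\<in>?G. b c * centred_edge m n th c X))
      = expect m n th (\<lambda>X. \<Sum>c\<in>?G. \<Sum>c'\<in>?G. (a c * b c') * (centred_edge m n th c X * centred_edge m n th c' X))"
    by (simp add: sum_product ac_simps)
  also have "\<dots> = (\<Sum>c\<in>?G. \<Sum>c'\<in>?G. (a c * b c') * (if c = c' then uij m n th (fst c) (snd c) else 0))"
    by (simp add: expect_sum expect_mult_left expect_centred_edge_mult)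
  also have "\<dots> = (\<Sum>c\<in>?G. uij m n th (fst c) (snd c) * a c * b c)"
    by (simp add: if_distrib ac_simps cong: if_cong)
  finally show ?thesis .
qed

text \<open>Cov[R (g - E g)] = R V R^T: the centred edge indicators are uncorrelated with variances u_ij.\<close>
lemma cov_mat_linear_degvec:
  fixes m n :: nat and R :: "nat \<Rightarrow> nat \<Rightarrow> real"
  defines "N \<equiv> m + n - 1"
  shows "cov_mat m n th (\<lambda>X k. \<Sum>l<N. R k l * (degvec m n X l - expect m n th (\<lambda>Y. degvec m n Y l))) k k'
           = (\<Sum>r<N. \<Sum>s<N. R k r * fisherV m n th r s * R k' s)"
proof -
  let ?G = "{..<m}\<times>{..<n}"
  define a where "a k c = (\<Sum>l<N. R k l * incidence m n c l)" for k c
  have Y: "(\<Sum>l<N. R k l * (degvec m n X l - expect m n th (\<lambda>Y. degvec m n Y l)))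
             = (\<Sum>c\<in>?G. a k c * centred_edge m n th c X)" for k X
  proof -
    have "(\<Sum>l<N. R k l * (degvec m n X l - expect m n th (\<lambda>Y. degvec m n Y l))) =
          (\<Sum>l<N. \<Sum>c\<in>?G. R k l * incidence m n c l * centred_edge m n th c X)"
      by (intro sum.cong refl) (simp add: N_def degvec_minus_expect sum_distrib_left ac_simps)
    then show ?thesis
      by (subst (asm) sum.swap) (simp add: a_def sum_distrib_right)
  qed
  have EY: "expect m n th (\<lambda>X. \<Sum>c\<in>?G. a k c * centred_edge m n th c X) = 0" for k
    by (simp add: expect_sum expect_mult_left expect_centred_edge)
  show ?thesis
    unfolding cov_mat_def Y EY expect_centred_edge_combination_mult
    unfolding N_def fisherV_quadratic_form a_def by simp
qed

lemma uij_pos: "uij m n th i j > 0"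
proof -
  have "1 + exp (alpha th i + beta m n th j) > 0" by (simp add: add_pos_pos)
  then show ?thesis unfolding uij_def by simp
qed

lemma fisherV_kernel_trivial:
  assumes m: "1 \<le> m" and n: "1 \<le> n"
    and ker: "\<forall>r<m+n-1. (\<Sum>s<m+n-1. fisherV m n th r s * x s) = 0"
  shows "\<forall>s<m+n-1. x s = 0"
proof -
  let ?G = "{..<m}\<times>{..<n}"
  define z where "z c = (\<Sum>r<m+n-1. x r * incidence m n c r)" for c
  have "(\<Sum>c\<in>?G. uij m n th (fst c) (snd c) * z c * z c)
          = (\<Sum>r<m+n-1. x r * (\<Sum>s<m+n-1. fisherV m n th r s * x s))"
    unfolding z_def fisherV_quadratic_form[symmetric] by (simp add: sum_distrib_left mult.assoc)
  also have "\<dots> = 0" using ker by simp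
  finally have sum0: "(\<Sum>c\<in>?G. uij m n th (fst c) (snd c) * (z c)\<^sup>2) = 0"
    by (simp add: power2_eq_square mult.assoc)
  have "0 \<le> uij m n th (fst c) (snd c) * (z c)\<^sup>2" for c
    using uij_pos[of m n th "fst c" "snd c"] by simp
  then have all0: "\<forall>c\<in>?G. uij m n th (fst c) (snd c) * (z c)\<^sup>2 = 0"
    using sum0 sum_nonneg_eq_0_iff[of ?G "\<lambda>c. uij m n th (fst c) (snd c) * (z c)\<^sup>2"] by simp
  have z: "z c = 0" if "c \<in> ?G" for c
  proof -
    have "uij m n th (fst c) (snd c) * (z c)\<^sup>2 = 0" using all0 that by (rule bspec)
    then show ?thesis using uij_pos[of m n th "fst c" "snd c"] by simp
  qed
  have row: "x i = 0" if "i < m" for i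
  proof -
    have "z (i, n - 1) = 0" using z that n by simp
    then show ?thesis unfolding z_def using that n by (subst (asm) sum_mult_incidence) auto
  qed
  show ?thesis
  proof (intro allI impI)
    fix s assume s: "s < m + n - 1"
    show "x s = 0"
    proof (cases "s < m")
      case False
      then have col: "s - m < n - 1" using s by arith
      then have "z (0, s - m) = 0" using z m by simp
      then show ?thesis
        using row[of 0] col m False unfolding z_def by (subst (asm) sum_mult_incidence) auto
    qed (rule row)
  qed
qed

lemma left_inverse_eq_right_inverse:
  fixes M W W' :: "nat \<Rightarrow> nat \<Rightarrow> real"
  assumes right: "\<forall>i<N. \<forall>j<N. (\<Sum>k<N. M i k * W k j) = (if i = j then 1 else 0)"
    and left: "\<forall>i<N. \<forall>j<N. (\<Sum>k<N. W' i k * M k j) = (if i = j then 1 else 0)"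
    and "i < N" "j < N"
  shows "W' i j = W i j"
proof -
  have "W' i j = (\<Sum>k<N. if k = j then W' i k else 0)"
    using \<open>j < N\<close> by simp
  also have "\<dots> = (\<Sum>k<N. W' i k * (\<Sum>r<N. M k r * W r j))"
    using right \<open>j < N\<close> by (intro sum.cong refl) auto
  also have "\<dots> = (\<Sum>k<N. \<Sum>r<N. W' i k * M k r * W r j)"
    by (simp add: sum_distrib_left mult.assoc)
  also have "\<dots> = (\<Sum>r<N. (\<Sum>k<N. W' i k * M k r) * W r j)"
    by (subst sum.swap) (simp add: sum_distrib_right)
  also have "\<dots> = (\<Sum>r<N. if r = i then W r j else 0)"
    using left \<open>i < N\<close> by (intro sum.cong refl) auto
  also have "\<dots> = W i j"
    using \<open>i < N\<close> by simp
  finally show ?thesis .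
qed

lemma mat_inv_eqI:
  fixes M W :: "nat \<Rightarrow> nat \<Rightarrow> real"
  assumes right: "\<forall>i<N. \<forall>j<N. (\<Sum>k<N. M i k * W k j) = (if i = j then 1 else 0)"
    and left: "\<forall>i<N. \<forall>j<N. (\<Sum>k<N. W i k * M k j) = (if i = j then 1 else 0)"
    and outside: "\<forall>i j. \<not> (i < N \<and> j < N) \<longrightarrow> W i j = 0"
  shows "mat_inv N M = W"
  unfolding mat_inv_def
proof (rule the_equality)
  fix W' assume W': "(\<forall>i<N. \<forall>j<N. (\<Sum>k<N. M i k * W' k j) = (if i = j then 1 else 0)) \<and>
     (\<forall>i<N. \<forall>j<N. (\<Sum>k<N. W' i k * M k j) = (if i = j then 1 else 0)) \<and>
     (\<forall>i j. \<not> (i < N \<and> j < N) \<longrightarrow> W' i j = 0)"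
  show "W' = W"
  proof (intro ext)
    fix i j show "W' i j = W i j"
      using left_inverse_eq_right_inverse[OF right, of W' i j] W' outside by (cases "i < N \<and> j < N") auto
  qed
qed (use assms in simp)

lemma mat_inv_mult_left:
  fixes M :: "nat \<Rightarrow> nat \<Rightarrow> real"
  assumes ker: "\<And>x. \<forall>r<N. (\<Sum>s<N. M r s * x s) = 0 \<Longrightarrow> \<forall>s<N. x s = 0"
    and "i < N" "j < N"
  shows "(\<Sum>k<N. mat_inv N M i k * M k j) = (if i = j then 1 else 0)"
proof -
  let ?A = "mat N N (\<lambda>(i, j). M i j)"
  have A: "?A \<in> carrier_mat N N" by simp
  have "det ?A \<noteq> 0"
  proof
    assume "det ?A = 0"
    then obtain v where v: "v \<in> carrier_vec N" "v \<noteq> 0\<^sub>v N" "?A *\<^sub>v v = 0\<^sub>v N"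
      using det_0_iff_vec_prod_zero[OF A] by auto
    have "\<forall>r<N. (\<Sum>s<N. M r s * v $ s) = 0"
    proof (intro allI impI)
      fix r assume r: "r < N"
      have "(?A *\<^sub>v v) $ r = 0" using v(3) r by simp
      then show "(\<Sum>s<N. M r s * v $ s) = 0"
        using r v(1) by (simp add: scalar_prod_def atLeast0LessThan)
    qed
    from ker[OF this] have "v = 0\<^sub>v N" using v(1) by (intro eq_vecI) auto
    with v(2) show False by simp
  qed
  from det_non_zero_imp_unit[OF A this, of "()"]
  obtain B where B: "B \<in> carrier_mat N N" "B * ?A = 1\<^sub>m N" "?A * B = 1\<^sub>m N"
    unfolding Units_def ring_mat_def by auto
  define W where "W i j = (if i < N \<and> j < N then B $$ (i, j) else 0)" for i j
  have left: "\<forall>i<N. \<forall>j<N. (\<Sum>k<N. W i k * M k j) = (if i = j then 1 else 0)"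
  proof (intro allI impI)
    fix i j assume ij: "i < N" "j < N"
    have "(B * ?A) $$ (i, j) = (if i = j then 1 else 0)" using B(2) ij by simp
    then show "(\<Sum>k<N. W i k * M k j) = (if i = j then 1 else 0)"
      using ij B(1) by (simp add: scalar_prod_def atLeast0LessThan W_def)
  qed
  have right: "\<forall>i<N. \<forall>j<N. (\<Sum>k<N. M i k * W k j) = (if i = j then 1 else 0)"
  proof (intro allI impI)
    fix i j assume ij: "i < N" "j < N"
    have "(?A * B) $$ (i, j) = (if i = j then 1 else 0)" using B(3) ij by simp
    then show "(\<Sum>k<N. M i k * W k j) = (if i = j then 1 else 0)"
      using ij B(1) by (simp add: scalar_prod_def atLeast0LessThan W_def)
  qed
  have "mat_inv N M = W"
    by (rule mat_inv_eqI[OF right left]) (simp add: W_def)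
  then show ?thesis using left assms by simp
qed

lemma mat_inv_fisherV_mult_left:
  assumes "1 \<le> m" "1 \<le> n" "i < m + n - 1" "j < m + n - 1"
  shows "(\<Sum>k<m+n-1. mat_inv (m+n-1) (fisherV m n th) i k * fisherV m n th k j) = (if i = j then 1 else 0)"
  by (rule mat_inv_mult_left) (use fisherV_kernel_trivial[OF assms(1,2)] assms in auto)

lemma quadratic_form_inverse_minus:
  fixes W V S :: "nat \<Rightarrow> nat \<Rightarrow> real"
  assumes WV: "\<And>i j. i < N \<Longrightarrow> j < N \<Longrightarrow> (\<Sum>k<N. W i k * V k j) = (if i = j then 1 else 0)"
    and sym: "\<And>r s. r < N \<Longrightarrow> s < N \<Longrightarrow> V r s = V s r"
    and kl: "k < N" "l < N"
  shows "(\<Sum>r<N. \<Sum>s<N. (W k r - S k r) * V r s * (W l s - S l s)) =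
         (W l k - S l k) - S k l + (\<Sum>r<N. \<Sum>s<N. S k r * V r s * S l s)"
proof -
  define SV where "SV s = (\<Sum>r<N. S k r * V r s)" for s
  have SVW: "(\<Sum>s<N. SV s * W l s) = S k l"
  proof -
    have "(\<Sum>s<N. SV s * W l s) = (\<Sum>s<N. \<Sum>r<N. S k r * (W l s * V s r))"
      unfolding SV_def sum_distrib_right by (intro sum.cong refl) (simp add: sym)
    also have "\<dots> = (\<Sum>r<N. S k r * (\<Sum>s<N. W l s * V s r))"
      by (subst sum.swap) (simp add: sum_distrib_left)
    also have "\<dots> = (\<Sum>r<N. if r = l then S k r else 0)"
      using WV kl by (intro sum.cong refl) auto
    finally show ?thesis using kl by simp
  qed
  have "(\<Sum>r<N. \<Sum>s<N. (W k r - S k r) * V r s * (W l s - S l s)) =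
        (\<Sum>s<N. ((\<Sum>r<N. W k r * V r s) - SV s) * (W l s - S l s))"
    unfolding SV_def
    by (subst sum.swap) (simp add: left_diff_distrib sum_subtractf sum_distrib_right)
  also have "\<dots> = (\<Sum>s<N. ((if k = s then 1 else 0) - SV s) * (W l s - S l s))"
    using WV kl by simp
  also have "\<dots> = (\<Sum>s<N. (if s = k then W l s - S l s else 0) - SV s * W l s + SV s * S l s)"
    by (intro sum.cong refl) (auto simp: algebra_simps)
  also have "\<dots> = (W l k - S l k) - (\<Sum>s<N. SV s * W l s) + (\<Sum>s<N. SV s * S l s)"
    using kl by (simp add: sum.distrib sum_subtractf)
  also have "(\<Sum>s<N. SV s * S l s) = (\<Sum>r<N. \<Sum>s<N. S k r * V r s * S l s)"
    by (simp add: SV_def sum_distrib_right) (rule sum.swap)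
  finally show ?thesis by (simp only: SVW)
qed

definition approxS_incidence :: "nat \<Rightarrow> nat \<Rightarrow> (nat \<Rightarrow> real) \<Rightarrow> real \<Rightarrow> nat \<Rightarrow> nat \<Rightarrow> nat \<Rightarrow> real" where
  "approxS_incidence m n d vl k i j = (if k < m then (if k = i then 1 / d k else 0) + (if j = n - 1 then 1 / vl else 0)
      else (if j < n - 1 \<and> k = m + j then 1 / d k else 0) - (if j = n - 1 then 1 / vl else 0))"

lemma approxS_incidence_quadratic_row_row:
  fixes u :: "nat \<Rightarrow> nat \<Rightarrow> real" and d :: "nat \<Rightarrow> real"
  assumes n: "n = Suc n'" and k: "k < m" and l: "l < m"
    and dpos: "\<And>i. i < m \<Longrightarrow> d i > 0" and d: "\<And>i. i < m \<Longrightarrow> d i = (\<Sum>j<n. u i j)"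
    and vl: "vl = (\<Sum>i<m. u i n')" and vlpos: "vl > 0"
  shows "(\<Sum>i<m. \<Sum>j<n. u i j * approxS_incidence m n d vl k i j * approxS_incidence m n d vl l i j)
     = (if k = l then 1 / d k else 0) + 1 / vl + u k n' / (d k * vl) + u l n' / (d l * vl)"
proof -
  define A where "A i = (if k = i then 1 / d k else 0)" for i
  define B where "B i = (if l = i then 1 / d l else 0)" for i
  have inner: "(\<Sum>j<n. u i j * approxS_incidence m n d vl k i j * approxS_incidence m n d vl l i j)
     = (if k = i \<and> l = i then 1 / d i else 0) + u i n' * A i / vl + u i n' * B i / vl + u i n' / vl^2"
    if i: "i < m" for i
  proof -
    have "(\<Sum>j<n. u i j * approxS_incidence m n d vl k i j * approxS_incidence m n d vl l i j)
       = (\<Sum>j<n'. u i j * A i * B i) + u i n' * (A i + 1/vl) * (B i + 1/vl)"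
      unfolding n sum.lessThan_Suc using k l
      by (simp add: approxS_incidence_def A_def B_def)
    also have "(\<Sum>j<n'. u i j * A i * B i) = (d i - u i n') * A i * B i"
      using d[OF i] unfolding n by (simp add: sum_distrib_right)
    finally have e: "(\<Sum>j<n. u i j * approxS_incidence m n d vl k i j * approxS_incidence m n d vl l i j) =
        (d i - u i n') * A i * B i + u i n' * (A i + 1/vl) * (B i + 1/vl)" .
    have "(d i - u i n') * A i * B i + u i n' * (A i + 1/vl) * (B i + 1/vl)
        = d i * A i * B i + u i n' * A i / vl + u i n' * B i / vl + u i n' / vl^2"
      using vlpos by (simp add: field_simps power2_eq_square)
    also have "d i * A i * B i = (if k = i \<and> l = i then 1 / d i else 0)"
      using dpos[OF i] by (auto simp: A_def B_def)
    finally show ?thesis using e by simp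
  qed
  have "(\<Sum>i<m. \<Sum>j<n. u i j * approxS_incidence m n d vl k i j * approxS_incidence m n d vl l i j)
     = (\<Sum>i<m. (if k = i \<and> l = i then 1 / d i else 0) + u i n' * A i / vl + u i n' * B i / vl + u i n' / vl^2)"
    using inner by simp
  also have "\<dots> = (\<Sum>i<m. (if k = i \<and> l = i then 1 / d i else 0)) + (\<Sum>i<m. u i n' * A i / vl)
      + (\<Sum>i<m. u i n' * B i / vl) + (\<Sum>i<m. u i n' / vl^2)"
    by (simp add: sum.distrib)
  also have "(\<Sum>i<m. (if k = i \<and> l = i then 1 / d i else 0)) = (if k = l then 1 / d k else 0)"
  proof -
    have e: "(\<lambda>i. if k = i \<and> l = i then 1 / d i else 0) = (\<lambda>i. if k = i then (if k = l then 1 / d k else 0) else 0)"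
      by auto
    show ?thesis using k by (simp only: e) (simp add: sum.delta)
  qed
  also have "(\<Sum>i<m. u i n' * A i / vl) = u k n' / (d k * vl)"
  proof -
    have e: "(\<lambda>i. u i n' * A i / vl) = (\<lambda>i. if k = i then u k n' / (d k * vl) else 0)"
      by (auto simp: A_def fun_eq_iff)
    show ?thesis using k by (simp only: e) (simp add: sum.delta)
  qed
  also have "(\<Sum>i<m. u i n' * B i / vl) = u l n' / (d l * vl)"
  proof -
    have e: "(\<lambda>i. u i n' * B i / vl) = (\<lambda>i. if l = i then u l n' / (d l * vl) else 0)"
      by (auto simp: B_def fun_eq_iff)
    show ?thesis using l by (simp only: e) (simp add: sum.delta)
  qed
  also have "(\<Sum>i<m. u i n' / vl^2) = 1 / vl"
    using vlpos by (simp add: vl sum_divide_distrib[symmetric] power2_eq_square)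
  finally show ?thesis by simp
qed

lemma approxS_incidence_quadratic_row_col:
  fixes u :: "nat \<Rightarrow> nat \<Rightarrow> real" and d :: "nat \<Rightarrow> real"
  assumes n: "n = Suc n'" and k: "k < m" and l: "l = m + jb" and jb: "jb < n'"
    and vl: "vl = (\<Sum>i<m. u i n')" and vlpos: "vl > 0"
  shows "(\<Sum>i<m. \<Sum>j<n. u i j * approxS_incidence m n d vl k i j * approxS_incidence m n d vl l i j)
     = u k jb / (d k * d l) - u k n' / (d k * vl) - 1 / vl"
proof -
  define A where "A i = (if k = i then 1 / d k else 0)" for i
  have inner: "(\<Sum>j<n. u i j * approxS_incidence m n d vl k i j * approxS_incidence m n d vl l i j)
     = u i jb * A i / d l - u i n' * A i / vl - u i n' / vl^2" for i
  proof -
    have "(\<Sum>j<n. u i j * approxS_incidence m n d vl k i j * approxS_incidence m n d vl l i j)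
       = (\<Sum>j<n'. if j = jb then u i j * A i / d l else 0) + u i n' * (A i + 1/vl) * (0 - 1/vl)"
      unfolding n sum.lessThan_Suc using k l jb
      by (intro arg_cong2[where f="(+)"] sum.cong refl) (auto simp: approxS_incidence_def A_def)
    also have "(\<Sum>j<n'. if j = jb then u i j * A i / d l else 0) = u i jb * A i / d l"
      using jb by (simp add: sum.delta')
    also have "u i n' * (A i + 1/vl) * (0 - 1/vl) = - (u i n' * A i / vl) - u i n' / vl^2"
      using vlpos by (simp add: field_simps power2_eq_square)
    finally show ?thesis by simp
  qed
  have "(\<Sum>i<m. \<Sum>j<n. u i j * approxS_incidence m n d vl k i j * approxS_incidence m n d vl l i j)
     = (\<Sum>i<m. u i jb * A i / d l) - (\<Sum>i<m. u i n' * A i / vl) - (\<Sum>i<m. u i n' / vl^2)"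
    using inner by (simp add: sum_subtractf)
  also have "(\<Sum>i<m. u i jb * A i / d l) = u k jb / (d k * d l)"
  proof -
    have e: "(\<lambda>i. u i jb * A i / d l) = (\<lambda>i. if k = i then u k jb / (d k * d l) else 0)"
      by (auto simp: A_def fun_eq_iff)
    show ?thesis using k by (simp only: e) (simp add: sum.delta)
  qed
  also have "(\<Sum>i<m. u i n' * A i / vl) = u k n' / (d k * vl)"
  proof -
    have e: "(\<lambda>i. u i n' * A i / vl) = (\<lambda>i. if k = i then u k n' / (d k * vl) else 0)"
      by (auto simp: A_def fun_eq_iff)
    show ?thesis using k by (simp only: e) (simp add: sum.delta)
  qed
  also have "(\<Sum>i<m. u i n' / vl^2) = 1 / vl"
    using vlpos by (simp add: vl sum_divide_distrib[symmetric] power2_eq_square)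
  finally show ?thesis by simp
qed

lemma approxS_incidence_quadratic_col_col:
  fixes u :: "nat \<Rightarrow> nat \<Rightarrow> real" and d :: "nat \<Rightarrow> real"
  assumes n: "n = Suc n'" and k: "k = m + ja" and l: "l = m + jb" and ja: "ja < n'" and jb: "jb < n'"
    and dk: "d k = (\<Sum>i<m. u i ja)" and dkpos: "d k > 0"
    and vl: "vl = (\<Sum>i<m. u i n')" and vlpos: "vl > 0"
  shows "(\<Sum>i<m. \<Sum>j<n. u i j * approxS_incidence m n d vl k i j * approxS_incidence m n d vl l i j)
     = (if k = l then 1 / d k else 0) + 1 / vl"
proof -
  have inner: "(\<Sum>j<n. u i j * approxS_incidence m n d vl k i j * approxS_incidence m n d vl l i j)
     = (if ja = jb then u i ja / (d k * d k) else 0) + u i n' / vl^2" for i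
  proof -
    have "(\<Sum>j<n. u i j * approxS_incidence m n d vl k i j * approxS_incidence m n d vl l i j)
       = (\<Sum>j<n'. if j = ja then (if ja = jb then u i j / (d k * d k) else 0) else 0) + u i n' * (0 - 1/vl) * (0 - 1/vl)"
      unfolding n sum.lessThan_Suc using k l ja jb
      by (intro arg_cong2[where f="(+)"] sum.cong refl) (auto simp: approxS_incidence_def)
    also have "(\<Sum>j<n'. if j = ja then (if ja = jb then u i j / (d k * d k) else 0) else 0)
        = (if ja = jb then u i ja / (d k * d k) else 0)"
      using ja by (simp add: sum.delta')
    finally show ?thesis by (simp add: power2_eq_square)
  qed
  have "(\<Sum>i<m. \<Sum>j<n. u i j * approxS_incidence m n d vl k i j * approxS_incidence m n d vl l i j)
     = (\<Sum>i<m. (if ja = jb then u i ja / (d k * d k) else 0)) + (\<Sum>i<m. u i n' / vl^2)"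
    using inner by (simp add: sum.distrib)
  also have "(\<Sum>i<m. (if ja = jb then u i ja / (d k * d k) else 0)) = (if k = l then 1 / d k else 0)"
  proof (cases "ja = jb")
    case True
    then have "k = l" using k l by simp
    have "(\<Sum>i<m. (if ja = jb then u i ja / (d k * d k) else 0)) = (\<Sum>i<m. u i ja) / (d k * d k)"
      using True by (simp add: sum_divide_distrib)
    also have "\<dots> = 1 / d k" using dkpos by (simp add: dk[symmetric])
    finally show ?thesis using \<open>k = l\<close> by simp
  next
    case False
    then have "k \<noteq> l" using k l by simp
    then show ?thesis using False by simp
  qed
  also have "(\<Sum>i<m. u i n' / vl^2) = 1 / vl"
    using vlpos by (simp add: vl sum_divide_distrib[symmetric] power2_eq_square)
  finally show ?thesis by simp
qed

lemma approxS_mult_incidence: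
  assumes "1 \<le> m" "1 \<le> n" "k < m+n-1" "i < m" "j < n"
  shows "(\<Sum>r<m+n-1. approxS m n th k r * incidence m n (i, j) r)
           = approxS_incidence m n (\<lambda>k. fisherV m n th k k) (vlast m n th) k i j"
proof -
  have "i < m + n - 1" "j < n - 1 \<Longrightarrow> m + j < m + n - 1" "\<not> j < n - 1 \<Longrightarrow> j = n - 1"
    using assms by arith+
  then show ?thesis
    using assms by (subst sum_mult_incidence) (auto simp: approxS_def approxS_incidence_def)
qed

definition approxS_sandwich :: "nat \<Rightarrow> nat \<Rightarrow> (nat \<Rightarrow> real) \<Rightarrow> nat \<Rightarrow> nat \<Rightarrow> real" where
  "approxS_sandwich m n th k l =
     (\<Sum>r<m+n-1. \<Sum>s<m+n-1. approxS m n th k r * fisherV m n th r s * approxS m n th l s)"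

lemma approxS_sandwich_cells:
  assumes "1 \<le> m" "1 \<le> n" "k < m+n-1" "l < m+n-1"
  shows "approxS_sandwich m n th k l =
    (\<Sum>i<m. \<Sum>j<n. uij m n th i j * approxS_incidence m n (\<lambda>k. fisherV m n th k k) (vlast m n th) k i j
                               * approxS_incidence m n (\<lambda>k. fisherV m n th k k) (vlast m n th) l i j)"
  unfolding approxS_sandwich_def fisherV_quadratic_form
  unfolding sum.cartesian_product
proof (intro sum.cong refl)
  fix c assume "c \<in> {..<m}\<times>{..<n}"
  then obtain i j where c: "c = (i, j)" "i < m" "j < n" by blast
  show "uij m n th (fst c) (snd c) * (\<Sum>r<m+n-1. approxS m n th k r * incidence m n c r)
          * (\<Sum>s<m+n-1. approxS m n th l s * incidence m n c s) =
        (case c of (i, j) \<Rightarrow> uij m n th i j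
          * approxS_incidence m n (\<lambda>k. fisherV m n th k k) (vlast m n th) k i j
          * approxS_incidence m n (\<lambda>k. fisherV m n th k k) (vlast m n th) l i j)"
    using assms c by (simp only: approxS_mult_incidence fst_conv snd_conv prod.case)
qed

lemma logistic_density_antimono:
  fixes x y :: real
  assumes "\<bar>x\<bar> \<le> y"
  shows "exp y / (1 + exp y)\<^sup>2 \<le> exp x / (1 + exp x)\<^sup>2"
proof -
  have cosh: "exp z / (1 + exp z)\<^sup>2 = 1 / (2 * cosh z + 2)" for z :: real
  proof -
    have "(1 + exp z)\<^sup>2 = exp z * (2 * cosh z + 2)"
      by (simp add: cosh_def power2_eq_square algebra_simps exp_minus)
    then show ?thesis by simp
  qed
  have "cosh x \<le> cosh y"
    using assms cosh_real_nonneg_le_iff[of "\<bar>x\<bar>" y] by simp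
  moreover have "0 < 2 * cosh z + 2" for z :: real
    using cosh_real_pos[of z] by linarith
  ultimately show ?thesis unfolding cosh
    by (intro divide_left_mono mult_pos_pos) auto
qed

lemma uij_ge:
  fixes th :: "nat \<Rightarrow> real"
  assumes "1 \<le> m" "i < m" "j < n"
  defines "M \<equiv> sup_norm (m+n-1) th"
  shows "exp (2 * M) / (1 + exp (2 * M))\<^sup>2 \<le> uij m n th i j"
proof -
  have le_M: "\<bar>th r\<bar> \<le> M" if "r < m + n - 1" for r
    unfolding M_def sup_norm_def using that by (intro Max_ge) auto
  have "0 \<le> M" using le_M[of 0] assms by linarith
  then have "\<bar>beta m n th j\<bar> \<le> M" using le_M[of "m + j"] by (simp add: beta_def)
  moreover have "\<bar>alpha th i\<bar> \<le> M" using le_M[of i] assms by (simp add: alpha_def)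
  ultimately show ?thesis unfolding uij_def by (intro logistic_density_antimono) linarith
qed

lemma uij_le_quarter: "uij m n th i j \<le> 1/4"
proof -
  define e where "e = exp (alpha th i + beta m n th j)"
  have "4 * e \<le> (1 + e)\<^sup>2" using sum_squares_ge_zero[of "1 - e" 0]
    by (simp add: power2_eq_square algebra_simps)
  moreover have "e > 0" by (simp add: e_def)
  ultimately show ?thesis unfolding uij_def e_def[symmetric] by (simp add: field_simps)
qed

lemma divide_mult_le_quarter:
  fixes u x y p q :: real
  assumes "0 \<le> u" "u \<le> 1/4" "0 < p" "0 < q" "p \<le> x" "q \<le> y"
  shows "0 \<le> u / (x * y) \<and> u / (x * y) \<le> 1 / (4 * p * q)"
proof -
  have pq: "0 < p * q" "p * q \<le> x * y" using assms by (auto intro: mult_mono)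
  have "u / (x * y) \<le> (1/4) / (x * y)" using assms pq by (intro divide_right_mono) auto
  also have "\<dots> \<le> (1/4) / (p * q)" using pq by (intro divide_left_mono) auto
  finally show ?thesis using assms pq by (simp add: mult.assoc)
qed

context
  fixes m n :: nat and th :: "nat \<Rightarrow> real" and b :: real
  assumes m_pos: "1 \<le> m" and m_le_n: "m \<le> n" and b_pos: "0 < b"
    and uij_ge_b: "\<And>i j. i < m \<Longrightarrow> j < n \<Longrightarrow> b \<le> uij m n th i j"
begin

lemma fisherV_row_diag_ge: "i < m \<Longrightarrow> real n * b \<le> fisherV m n th i i"
  using sum_bounded_below[of "{..<n}" b "uij m n th i"] uij_ge_b by (simp add: fisherV_def)

lemma fisherV_col_diag_ge:
  assumes "m \<le> k" "k < m + n - 1"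
  shows "real m * b \<le> fisherV m n th k k"
proof -
  have "(\<Sum>i<m. b) \<le> (\<Sum>i<m. uij m n th i (k - m))"
    using assms uij_ge_b by (intro sum_mono) auto
  then show ?thesis using assms by (simp add: fisherV_def)
qed

lemma vlast_ge: "real m * b \<le> vlast m n th"
  using sum_bounded_below[of "{..<m}" b "\<lambda>i. uij m n th i (n - 1)"] uij_ge_b m_pos m_le_n
  by (simp add: vlast_def)

lemma vlast_pos: "0 < vlast m n th"
proof -
  have "0 < real m * b" using b_pos m_pos by simp
  then show ?thesis using vlast_ge by linarith
qed

lemma uij_divide_le:
  assumes "real n * b \<le> x" "real m * b \<le> y"
  shows "0 \<le> uij m n th i j / (x * y) \<and> uij m n th i j / (x * y) \<le> 1 / (4 * (real n * b) * (real m * b))"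
  using divide_mult_le_quarter[OF less_imp_le[OF uij_pos] uij_le_quarter _ _ assms] b_pos m_pos m_le_n
  by simp

lemma approxS_sandwich_minus_approxS_row_col:
  assumes k: "k < m" and l: "m \<le> l" "l < m + n - 1"
  shows "\<bar>approxS_sandwich m n th k l - approxS m n th k l\<bar> \<le> 1 / (4 * (real n * b) * (real m * b))"
proof -
  obtain n' where n: "n = Suc n'" using m_pos m_le_n by (cases n) auto
  let ?d = "\<lambda>k. fisherV m n th k k" and ?vl = "vlast m n th" and ?u = "uij m n th"
  have lm: "l = m + (l - m)" "l - m < n'" using l n by arith+
  have vl: "?vl = (\<Sum>i<m. ?u i n')" by (simp add: vlast_def n)
  have "approxS_sandwich m n th k l = ?u k (l - m) / (?d k * ?d l) - ?u k n' / (?d k * ?vl) - 1 / ?vl"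
    using approxS_sandwich_cells[of m n k l th]
      approxS_incidence_quadratic_row_col[where d = ?d and u = ?u, OF n k lm vl vlast_pos]
      k l m_pos m_le_n by simp
  moreover have "approxS m n th k l = - 1 / ?vl" using k l by (simp add: approxS_def)
  moreover note uij_divide_le[OF fisherV_row_diag_ge[OF k] fisherV_col_diag_ge[OF l], where i = k and j = "l - m"]
    uij_divide_le[OF fisherV_row_diag_ge[OF k] vlast_ge, where i = k and j = n']
  ultimately show ?thesis by (simp add: abs_le_iff)
qed

lemma approxS_sandwich_minus_approxS:
  assumes k: "k < m + n - 1" and l: "l < m + n - 1"
  shows "\<bar>approxS_sandwich m n th k l - approxS m n th k l\<bar> \<le> 2 * (1 / (4 * (real n * b) * (real m * b)))"
proof -
  obtain n' where n: "n = Suc n'" using m_pos m_le_n by (cases n) auto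
  let ?d = "\<lambda>k. fisherV m n th k k" and ?vl = "vlast m n th" and ?u = "uij m n th"
  let ?Bd = "1 / (4 * (real n * b) * (real m * b))"
  have "0 < real m * b" "0 < real n * b" using b_pos m_pos m_le_n by auto
  then have Bd: "0 \<le> ?Bd" and d_pos: "\<And>i. i < m \<Longrightarrow> 0 < ?d i"
    using fisherV_row_diag_ge by (auto intro: less_le_trans)
  have vl: "?vl = (\<Sum>i<m. ?u i n')" by (simp add: vlast_def n)
  have S: "approxS m n th k l = (if (k < m \<and> l < m) \<or> (m \<le> k \<and> m \<le> l)
                                  then (if k = l then 1 / ?d k else 0) + 1 / ?vl else - 1 / ?vl)"
    using k l by (simp add: approxS_def)
  have cells: "approxS_sandwich m n th k l
      = (\<Sum>i<m. \<Sum>j<n. ?u i j * approxS_incidence m n ?d ?vl k i j * approxS_incidence m n ?d ?vl l i j)"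
    using approxS_sandwich_cells k l m_pos m_le_n by simp
  consider "k < m" "l < m" | "k < m" "m \<le> l" | "m \<le> k" "l < m" | "m \<le> k" "m \<le> l" by linarith
  then show ?thesis
  proof cases
    case 1
    have "approxS_sandwich m n th k l - approxS m n th k l = ?u k n' / (?d k * ?vl) + ?u l n' / (?d l * ?vl)"
      using approxS_incidence_quadratic_row_row[where d = ?d and u = ?u, OF n 1 d_pos _ vl vlast_pos] 1 cells S
      by (simp add: fisherV_def)
    moreover note uij_divide_le[OF fisherV_row_diag_ge[OF 1(1)] vlast_ge, where i = k and j = n']
      uij_divide_le[OF fisherV_row_diag_ge[OF 1(2)] vlast_ge, where i = l and j = n']
    ultimately show ?thesis by (simp only: abs_le_iff) (elim conjE; linarith)
  next
    case 2
    then show ?thesis using approxS_sandwich_minus_approxS_row_col[OF 2 l] Bd by linarith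
  next
    case 3
    have "approxS_sandwich m n th k l = approxS_sandwich m n th l k"
      using approxS_sandwich_cells k l m_pos m_le_n by (simp add: ac_simps)
    moreover have "approxS m n th k l = approxS m n th l k"
      using k l by (simp add: approxS_def)
    ultimately show ?thesis using approxS_sandwich_minus_approxS_row_col[OF 3(2,1) k] Bd by linarith
  next
    case 4
    have j: "k = m + (k - m)" "l = m + (l - m)" "k - m < n'" "l - m < n'" using 4 k l n by arith+
    have "?d k = (\<Sum>i<m. ?u i (k - m))" "0 < ?d k"
      using j fisherV_col_diag_ge[of k] k 4 \<open>0 < real m * b\<close> by (auto simp: fisherV_def)
    then have "approxS_sandwich m n th k l = approxS m n th k l"
      using approxS_incidence_quadratic_col_col[where d = ?d and u = ?u, OF n j _ _ vl vlast_pos] 4 cells S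
      by simp
    then show ?thesis using Bd by simp
  qed
qed

lemma cov_mat_linear_degvec_entry_le:
  defines "N \<equiv> m + n - 1"
  defines "U \<equiv> cov_mat m n th
     (\<lambda>X k. \<Sum>l<N. (mat_inv N (fisherV m n th) k l - approxS m n th k l)
                      * (degvec m n X l - expect m n th (\<lambda>Y. degvec m n Y l)))"
  assumes k: "k < N" and l: "l < N"
  shows "\<bar>U k l\<bar> \<le> \<bar>mat_inv N (fisherV m n th) l k - approxS m n th l k\<bar>
                     + 2 * (1 / (4 * (real n * b) * (real m * b)))"
proof -
  have "U k l = (mat_inv N (fisherV m n th) l k - approxS m n th l k) - approxS m n th k l
                 + approxS_sandwich m n th k l"
    unfolding U_def cov_mat_linear_degvec approxS_sandwich_def N_def
    by (rule quadratic_form_inverse_minus)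
       (use k l mat_inv_fisherV_mult_left[OF m_pos] m_le_n fisherV_sym in \<open>auto simp: N_def\<close>)
  then have "\<bar>U k l\<bar> \<le> \<bar>mat_inv N (fisherV m n th) l k - approxS m n th l k\<bar>
                        + \<bar>approxS_sandwich m n th k l - approxS m n th k l\<bar>"
    using abs_triangle_ineq[of "mat_inv N (fisherV m n th) l k - approxS m n th l k"
                               "approxS_sandwich m n th k l - approxS m n th k l"] by simp
  then show ?thesis
    using approxS_sandwich_minus_approxS k l unfolding N_def by (smt (verit))
qed

end

lemma max_norm_ge: "i < N \<Longrightarrow> j < N \<Longrightarrow> \<bar>A i j\<bar> \<le> max_norm N A"
  unfolding max_norm_def by (intro Max_ge) (auto simp: finite_image_set2)

lemma max_norm_le:
  assumes "0 < N" and "\<And>i j. i < N \<Longrightarrow> j < N \<Longrightarrow> \<bar>A i j\<bar> \<le> c"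
  shows "max_norm N A \<le> c"
  unfolding max_norm_def using assms by (intro Max.boundedI) (auto simp: finite_image_set2)

theorem lemma6:
  fixes m n :: nat and theta :: "nat \<Rightarrow> real"
  assumes "1 \<le> m" and "m \<le> n"
  defines "N \<equiv> m + n - 1"
  defines "R \<equiv> (\<lambda>k l. mat_inv N (fisherV m n theta) k l - approxS m n theta k l)"
  defines "U \<equiv> cov_mat m n theta
     (\<lambda>X k. \<Sum>l<N. R k l * (degvec m n X l - expect m n theta (\<lambda>Y. degvec m n Y l)))"
  shows "max_norm N U \<le> max_norm N R
     + 3 * (1 + exp (2 * sup_norm N theta))^4 / (4 * m * n * exp (4 * sup_norm N theta))"
proof -
  define E where "E = exp (2 * sup_norm N theta)"
  define b where "b = E / (1 + E)\<^sup>2"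
  have E: "0 < E" unfolding E_def by simp
  then have b: "0 < b" unfolding b_def by (intro divide_pos_pos) auto
  have ub: "b \<le> uij m n theta i j" if "i < m" "j < n" for i j
    using uij_ge[OF assms(1) that] unfolding b_def E_def N_def .
  define Bd where "Bd = 1 / (4 * (real n * b) * (real m * b))"
  have "\<bar>U k l\<bar> \<le> max_norm N R + 2 * Bd" if "k < N" "l < N" for k l
    using cov_mat_linear_degvec_entry_le[OF assms(1,2) b ub that[unfolded N_def]]
      max_norm_ge[OF that(2,1), of R]
    unfolding U_def R_def N_def Bd_def by linarith
  then have "max_norm N U \<le> max_norm N R + 2 * Bd"
    using assms(1,2) by (intro max_norm_le) (auto simp: N_def)
  moreover have "Bd = (1 + E)^4 / (4 * m * n * exp (4 * sup_norm N theta))"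
    using E by (simp add: Bd_def b_def E_def exp_add[symmetric] field_simps power2_eq_square power4_eq_xxxx)
  moreover have "0 \<le> Bd" using b by (simp add: Bd_def)
  ultimately show ?thesis
    unfolding E_def by (simp only: times_divide_eq_right[symmetric])
qed

end
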